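(* $\mathrm{GL}_4(\mathbb{F}_3)$ contains exactly one conjugacy class of subgroups isomorphic to $A_5\times C_2$. *)

theory Defs
  imports "HOL-Analysis.Analysis" "HOL-Algebra.Sym_Groups" "HOL-Algebra.Elementary_Groups"
begin

text \<open>GL_4(F_3): invertible 4x4 matrices over the field F_3, modelled by the
  numeral type 3 (arithmetic mod 3), under matrix multiplication.\<close>
definition GL4F3 :: "(3^4^4) monoid" where
  "GL4F3 = \<lparr>carrier = {A :: 3^4^4. invertible A}, mult = (**), one = mat 1\<rparr>"

definition A5xC2 :: "((nat \<Rightarrow> nat) \<times> int) monoid" where
  "A5xC2 = alt_group 5 \<times>\<times> integer_mod_group 2"

definition subgroups_iso :: "('a, 'm) monoid_scheme \<Rightarrow> ('b, 'n) monoid_scheme \<Rightarrow> 'a set set" where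
  "subgroups_iso G X = {H. subgroup H G \<and> G\<lparr>carrier := H\<rparr> \<cong> X}"

definition conjugate_subgroups :: "('a, 'm) monoid_scheme \<Rightarrow> 'a set \<Rightarrow> 'a set \<Rightarrow> bool" where
  "conjugate_subgroups G H K \<longleftrightarrow> (\<exists>g\<in>carrier G. K = g <#\<^bsub>G\<^esub> H #>\<^bsub>G\<^esub> inv\<^bsub>G\<^esub> g)"

end

theory Submission
  imports Defs "HOL-Number_Theory.Cong"
begin

(*
  Restricting an isomorphism A_5 x C_2 -> H <= GL_4(F_3) to A_5 gives a faithful
  representation psi of A_5 on F_3^4.  If g is a five-cycle, the kernel K of
  1 + g + ... + g^4 is g-stable, and g has no nonzero fixed vector in K (it would satisfy
  5w = -w = 0), so g permutes K - {0} in orbits of length 5.  Among the possible orders 3^i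
  of K only 1 and 81 are 1 mod 5, and K contains w - g w; hence 1 + g + ... + g^4 = 0, and
  g has no nonzero fixed vector at all.  A three-cycle permutes the three joint eigenspaces
  of the Klein four-group on which it acts nontrivially, so they have a common size b and
  the fixed space has size 81 / b^3; faithfulness forces b = 3.  Hence the Klein group fixes
  a line {0, v, -v}, and so does all of A_4.  The images of v under the powers of a
  five-cycle are permuted by A_5 as A_5 permutes {1..5} and sum to zero, so four of them
  form a basis in which psi is the standard representation on F_3^5 modulo the all-ones
  vector.  Finally the central involution commutes with the five-cycle, so it has no fixed
  vector and acts as -1.
*)

section \<open>Maps of prime period\<close>

lemma funpow_fixpoint_of_prime_period:
  assumes "prime p" and "(f ^^ p) t = t" and "(f ^^ k) t = t" and "\<not> p dvd k"
  shows "f t = t"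
proof -
  have "coprime k p"
    using assms(1,4) by (metis prime_imp_coprime coprime_commute)
  then obtain m where m: "[k * m = 1] (mod p)"
    using cong_solve_coprime_nat by auto
  have "((f ^^ k) ^^ m) t = t"
    by (induction m) (simp_all add: assms(3))
  then have "(f ^^ (k * m)) t = t"
    by (simp add: funpow_mult)
  then have "(f ^^ ((k * m) mod p)) t = t"
    using funpow_mod_eq[OF assms(2)] by simp
  moreover have "(k * m) mod p = 1"
    using m prime_gt_1_nat[OF assms(1)] by (simp add: cong_def)
  ultimately show ?thesis by simp
qed

lemma inj_on_funpow_prime_period:
  assumes "prime p" and "(f ^^ p) t = t" and "f t \<noteq> t"
  shows "inj_on (\<lambda>i. (f ^^ i) t) {..<p}"
proof -
  have eq: "i = j" if "i < p" "j < p" "i \<le> j" "(f ^^ i) t = (f ^^ j) t" for i j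
  proof (rule ccontr)
    assume "i \<noteq> j"
    have reorder: "p - i + j = j - i + p"
      using that by simp
    have "t = (f ^^ (p - i + i)) t"
      using \<open>i < p\<close> assms(2) by simp
    also have "\<dots> = (f ^^ (p - i + j)) t"
      using that(4) by (simp add: funpow_add)
    also have "\<dots> = (f ^^ (j - i + p)) t"
      by (simp only: reorder)
    also have "\<dots> = (f ^^ (j - i)) ((f ^^ p) t)"
      by (simp only: funpow_add[of "j - i" p] comp_apply)
    also have "\<dots> = (f ^^ (j - i)) t"
      using assms(2) by simp
    finally have "(f ^^ (j - i)) t = t" ..
    moreover have "\<not> p dvd j - i"
      using that \<open>i \<noteq> j\<close> by (auto dest: dvd_imp_le)
    ultimately show False
      using funpow_fixpoint_of_prime_period[OF assms(1,2)] assms(3) by blast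
  qed
  show ?thesis
  proof (rule inj_onI)
    fix i j assume "i \<in> {..<p}" "j \<in> {..<p}" "(f ^^ i) t = (f ^^ j) t"
    then show "i = j"
      using eq[of i j] eq[of j i] by (cases "i \<le> j") auto
  qed
qed

lemma prime_dvd_card_of_fixpoint_free:
  assumes "prime p" and "finite T" and "f ` T \<subseteq> T"
    and "\<And>t. t \<in> T \<Longrightarrow> (f ^^ p) t = t" and "\<And>t. t \<in> T \<Longrightarrow> f t \<noteq> t"
  shows "p dvd card T"
proof -
  define orb where "orb t = range (\<lambda>i. (f ^^ i) t)" for t
  have orb_T: "orb t \<subseteq> T" if "t \<in> T" for t
  proof -
    have "(f ^^ i) t \<in> T" for i
      by (induction i) (use that assms(3) in auto)
    then show ?thesis by (auto simp: orb_def)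
  qed
  have card_orb: "card (orb t) = p" if "t \<in> T" for t
  proof -
    have "orb t = (\<lambda>i. (f ^^ i) t) ` {..<p}"
      using funpow_mod_eq[OF assms(4)[OF that]] prime_gt_0_nat[OF assms(1)]
      by (auto simp: orb_def) (metis lessThan_iff mod_less_divisor rev_image_eqI)
    then show ?thesis
      using card_image[OF inj_on_funpow_prime_period[OF assms(1,4,5)]] that by simp
  qed
  have orb_trans: "orb x \<subseteq> orb t" if "x \<in> orb t" for x t
    using that by (auto simp: orb_def) (metis funpow_add comp_apply rangeI)
  have orb_sym: "t \<in> orb x" if "x \<in> orb t" "t \<in> T" for x t
  proof -
    obtain i where x: "x = (f ^^ i) t"
      using \<open>x \<in> orb t\<close> by (auto simp: orb_def)
    have "((f ^^ p) ^^ i) t = t"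
      by (induction i) (simp_all add: assms(4)[OF \<open>t \<in> T\<close>])
    moreover have "p * i = (p * i - i) + i"
      using prime_gt_0_nat[OF assms(1)] by simp
    ultimately have "(f ^^ (p * i - i)) x = t"
      unfolding x by (metis funpow_add funpow_mult comp_apply mult.commute)
    then show ?thesis by (auto simp: orb_def)
  qed
  have "p dvd card (\<Union> (orb ` T))"
  proof (rule dvd_partition)
    show "finite (\<Union> (orb ` T))"
      using orb_T assms(2) by (meson UN_least finite_subset)
    show "\<forall>c\<in>orb ` T. p dvd card c"
      using card_orb by auto
    show "\<forall>c1\<in>orb ` T. \<forall>c2\<in>orb ` T. c1 \<noteq> c2 \<longrightarrow> c1 \<inter> c2 = {}"
      using orb_trans orb_sym by (metis disjoint_iff subset_antisym imageE)
  qed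
  moreover have "\<Union> (orb ` T) = T"
    using orb_T by (auto simp: orb_def) (metis funpow_0 rangeI)
  ultimately show ?thesis by simp
qed

section \<open>Matrices over a commutative ring\<close>

lemma column_matrix_mult: "column j (A ** B) = (A :: 'a::semiring_1^'n^'m) *v column j B"
  by (simp add: vec_eq_iff column_def matrix_matrix_mult_def matrix_vector_mult_def)

lemma matrix_eq_columnsI: "(\<And>j. column j A = column j B) \<Longrightarrow> A = B"
  by (simp add: vec_eq_iff column_def)

lemma matrix_neg_mult: "(- A :: 'a::comm_ring_1^'n^'m) ** B = - (A ** B)"
  by (simp add: vec_eq_iff matrix_matrix_mult_def sum_negf)

lemma matrix_mult_neg: "(A :: 'a::comm_ring_1^'n^'m) ** (- B) = - (A ** B)"
  by (simp add: vec_eq_iff matrix_matrix_mult_def sum_negf)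

lemma matrix_neg_mult_vec: "(- A :: 'a::comm_ring_1^'n^'m) *v x = - (A *v x)"
  by (simp add: vec_eq_iff matrix_vector_mult_def sum_negf)

lemma invertible_uminus: "invertible (A :: 'a::comm_ring_1^'n^'n) \<Longrightarrow> invertible (- A)"
  unfolding invertible_def by (metis matrix_neg_mult matrix_mult_neg minus_minus)

lemma invertible_if_surj:
  fixes A :: "'a::{comm_ring_1, finite}^'n^'n"
  assumes surj: "surj ((*v) A)"
  shows "invertible A"
proof -
  have "\<forall>i. \<exists>x. A *v x = axis i 1"
    using surj by (metis surjD)
  then obtain b where b: "\<And>i. A *v b i = axis i 1"
    by metis
  define B :: "'a^'n^'n" where "B = (\<chi> r i. b i $ r)"
  have "column i B = b i" for i
    by (simp add: column_def B_def vec_eq_iff)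
  then have "column i (A ** B) = axis i 1" for i
    by (simp add: column_matrix_mult b)
  moreover have "column i (mat 1 :: 'a^'n^'n) = axis i 1" for i
    by (simp add: column_def mat_def axis_def vec_eq_iff)
  ultimately have "column i (A ** B) = column i (mat 1)" for i
    by simp
  then have AB: "A ** B = mat 1"
    by (rule matrix_eq_columnsI)
  have inj: "inj ((*v) A)"
    using finite_UNIV_surj_inj[OF _ surj] by simp
  have "A *v ((B ** A) *v c) = ((A ** B) ** A) *v c" for c
    by (simp add: matrix_vector_mul_assoc matrix_mul_assoc)
  then have "A *v ((B ** A) *v c) = A *v c" for c
    using AB by simp
  then have "(B ** A) *v c = c" for c
    using injD[OF inj] by simp
  then have "B ** A = mat 1"
    by (simp add: matrix_eq)
  with AB show ?thesis
    unfolding invertible_def by blast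
qed

section \<open>Additive subgroups of the vector space \<open>F\<^sub>3\<^sup>4\<close>\<close>

definition additive_group :: "'a::ab_group_add monoid" where
  "additive_group = \<lparr>carrier = UNIV, mult = (+), one = 0\<rparr>"

lemma group_additive_group: "group (additive_group :: 'a::ab_group_add monoid)"
  by (rule groupI) (auto simp: additive_group_def add.assoc intro: exI[of _ "- _"])

lemma card_additive_subgroup_dvd:
  fixes S :: "'a::{ab_group_add, finite} set"
  assumes "0 \<in> S" and "\<And>a b. a \<in> S \<Longrightarrow> b \<in> S \<Longrightarrow> a + b \<in> S"
    and "\<And>a. a \<in> S \<Longrightarrow> - a \<in> S"
  shows "card S dvd CARD('a)"
proof -
  let ?G = "additive_group :: 'a monoid"
  have "inv\<^bsub>?G\<^esub> a = - a" for a
    by (rule group.inv_equality[OF group_additive_group]) (simp_all add: additive_group_def)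
  then have "subgroup S ?G"
    by (intro group.subgroupI[OF group_additive_group]) (use assms in \<open>auto simp:
      additive_group_def\<close>)
  then have "card (rcosets\<^bsub>?G\<^esub> S) * card S = order ?G"
    by (rule group.lagrange[OF group_additive_group])
  then show ?thesis
    by (metis dvd_triv_right order_def partial_object.select_convs(1) additive_group_def)
qed

lemma additive_funpow:
  fixes f :: "'a::ab_group_add \<Rightarrow> 'a"
  assumes "Modules.additive f"
  shows "Modules.additive (f ^^ n)"
  by (induction n) (auto simp: Modules.additive_def Modules.additive.add[OF assms])

lemma sum_lessThan_5: "(\<Sum>i<(5::nat). f i) = f 0 + f 1 + f 2 + f 3 + (f 4 :: 'a::comm_monoid_add)"
  by (simp add: numeral_eq_Suc ac_simps)

lemma vec3_add_self_add_self [simp]: "(w :: 3^'n) + w + w = 0"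
proof -
  have "(a :: 3) + a + a = 0" for a
    using exhaust_3[of a] by auto
  then show ?thesis by (simp add: vec_eq_iff)
qed

lemma vec3_numerals: "(2 :: 3^'n) = - 1" "(3 :: 3^'n) = 0" "(5 :: 3^'n) = - 1"
  by (simp_all add: vec_eq_iff)

lemma vec3_uminus_eq: "- (w :: 3^'n) = w + w"
  by (metis add.assoc add_eq_0_iff2 vec3_add_self_add_self)

lemma vec3_add_self_eq_0_iff: "(w :: 3^'n) + w = 0 \<longleftrightarrow> w = 0"
  by (metis add_0 vec3_add_self_add_self)

lemma dvd_81_and_cong_1_mod_5:
  assumes "(n::nat) dvd 81" and "5 dvd n - 1"
  shows "n = 1 \<or> n = 81"
proof -
  obtain i where "i \<le> 4" and n: "n = 3 ^ i"
    using assms(1) divides_primepow_nat[of 3 n 4] by auto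
  then have "i = 0 \<or> i = 1 \<or> i = 2 \<or> i = 3 \<or> i = 4"
    by auto
  then show ?thesis
    using assms(2) n by auto
qed

(* f permutes S - {0} in orbits of length 5, while |S| divides 3^4. *)
lemma subgroup_of_stable_eq_0_or_UNIV:
  fixes f :: "3^4 \<Rightarrow> 3^4" and S :: "(3^4) set"
  assumes "Modules.additive f" and "f ^^ 5 = id" and "f ` S \<subseteq> S"
    and "0 \<in> S" and "\<And>a b. a \<in> S \<Longrightarrow> b \<in> S \<Longrightarrow> a + b \<in> S"
    and "\<And>w. w \<in> S \<Longrightarrow> f w = w \<Longrightarrow> w = 0"
  shows "S = {0} \<or> S = UNIV"
proof -
  have "- a \<in> S" if "a \<in> S" for a
    using assms(5)[OF that that] by (metis vec3_uminus_eq)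
  then have "card S dvd 81"
    using card_additive_subgroup_dvd[of S] assms(4,5) by (simp add: CARD_vec)
  have "(f ^^ 4) \<circ> f = id"
    using assms(2) funpow_Suc_right[of 4 f] by simp
  then have f_inj: "f w = f w' \<Longrightarrow> w = w'" for w w'
    by (metis comp_apply id_apply)
  have "5 dvd card (S - {0})"
  proof (rule prime_dvd_card_of_fixpoint_free)
    show "f ` (S - {0}) \<subseteq> S - {0}"
      using assms(3) f_inj Modules.additive.zero[OF assms(1)] by fastforce
    show "(f ^^ 5) t = t" for t
      using assms(2) by simp
    show "f t \<noteq> t" if "t \<in> S - {0}" for t
      using that assms(6) by blast
  qed simp_all
  then consider "card S = 1" | "card S = CARD(3^4)"
    using dvd_81_and_cong_1_mod_5[OF \<open>card S dvd 81\<close>] assms(4) by (auto simp: CARD_vec)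
  then show ?thesis
  proof cases
    case 1
    then show ?thesis
      using assms(4) by (auto simp: card_1_singleton_iff)
  next
    case 2
    then show ?thesis
      by (simp add: card_subset_eq)
  qed
qed

lemma sum_funpow_5_fixpoint:
  fixes f :: "3^4 \<Rightarrow> 3^4"
  assumes "f w = w"
  shows "(\<Sum>i<5. (f ^^ i) w) = - w"
proof -
  have "(f ^^ i) w = w" for i
    by (induction i) (simp_all add: assms)
  then show ?thesis
    by (simp add: vec3_numerals)
qed

lemma orbit_sum_eq_0:
  fixes f :: "3^4 \<Rightarrow> 3^4"
  assumes f: "Modules.additive f" and f5: "f ^^ 5 = id" and "f \<noteq> id"
  shows "(\<Sum>i<5. (f ^^ i) w) = 0"
proof -
  define \<Phi> where "\<Phi> w = (\<Sum>i<5. (f ^^ i) w)" for w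
  have \<Phi>_add: "Modules.additive \<Phi>"
    using additive_funpow[OF f]
    by (simp add: Modules.additive_def \<Phi>_def Modules.additive.add sum.distrib)
  have \<Phi>_f: "\<Phi> (f w) = \<Phi> w" for w
  proof -
    have "f (f (f (f (f w)))) = w"
      using fun_cong[OF f5, of w] by (simp add: numeral_eq_Suc)
    then show ?thesis
      by (simp add: \<Phi>_def numeral_eq_Suc ac_simps)
  qed
  let ?K = "{w. \<Phi> w = 0}"
  have "?K = {0} \<or> ?K = UNIV"
  proof (rule subgroup_of_stable_eq_0_or_UNIV[OF f f5])
    show "f ` ?K \<subseteq> ?K"
      using \<Phi>_f by auto
    show "0 \<in> ?K"
      by (simp add: Modules.additive.zero[OF \<Phi>_add])
    show "a + b \<in> ?K" if "a \<in> ?K" "b \<in> ?K" for a b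
      using that by (simp add: Modules.additive.add[OF \<Phi>_add])
    show "w = 0" if "w \<in> ?K" "f w = w" for w
      using that sum_funpow_5_fixpoint[of f w] by (simp add: \<Phi>_def)
  qed
  moreover obtain w0 where "f w0 \<noteq> w0"
    using assms(3) by (metis eq_id_iff)
  then have "w0 - f w0 \<in> ?K - {0}"
    using \<Phi>_f[of w0] by (simp add: Modules.additive.diff[OF \<Phi>_add])
  ultimately show ?thesis
    unfolding \<Phi>_def by blast
qed

section \<open>The standard representation of \<open>A\<^sub>5 \<times> C\<^sub>2\<close>\<close>

lemma exhaust_4': "(i :: 4) = 0 \<or> i = 1 \<or> i = 2 \<or> i = 3"
proof -
  have "Rep_bit0 i \<in> {0..<4}"
    using Rep_bit0[of i] by simp
  then have "Rep_bit0 i \<in> {0, 1, 2, 3}"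
    by auto
  moreover have "Rep_bit0 (2::4) = 2" "Rep_bit0 (3::4) = 3"
    by (simp_all add: bit0.Rep_numeral)
  ultimately show ?thesis
    by (auto simp only: insert_iff empty_iff bit0.Rep_inject_sym bit0.Rep_0 bit0.Rep_1)
qed

(* The elements 0, 1, 2, 3 of the numeral type 4 stand for the points 1, 2, 3, 4. *)
definition idx :: "4 \<Rightarrow> nat" where
  "idx i = nat (Rep_bit0 i) + 1"

lemma idx_simps [simp]: "idx 0 = 1" "idx 1 = 2" "idx 2 = 3" "idx 3 = 4"
  by (simp_all add: idx_def bit0.Rep_numeral bit0.Rep_0 bit0.Rep_1)

lemma idx_range: "idx i \<in> {1..4}"
  using exhaust_4'[of i] by auto

lemma idx_eq_iff [simp]: "idx i = idx j \<longleftrightarrow> i = j"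
  using exhaust_4'[of i] exhaust_4'[of j] by auto

lemma sum_UNIV_4: "(\<Sum>i\<in>UNIV. f i) = f (0 :: 4) + f 1 + f 2 + f 3"
proof -
  have UNIV_eq: "UNIV = {0, 1, 2, 3 :: 4}"
    using exhaust_4' by blast
  show ?thesis
    unfolding UNIV_eq by (simp add: add.assoc)
qed

(* The images of the unit vectors of F_3^5 in its quotient by the all-ones vector,
   written in the basis formed by the first four. *)
definition std_vec :: "nat \<Rightarrow> 3^4" where
  "std_vec k = (\<chi> i. if k = 5 then -1 else if idx i = k then 1 else 0)"

definition std_rep :: "(nat \<Rightarrow> nat) \<Rightarrow> 3^4^4" where
  "std_rep p = (\<chi> i j. std_vec (p (idx j)) $ i)"

lemma column_std_rep: "column j (std_rep p) = std_vec (p (idx j))"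
  by (simp add: vec_eq_iff column_def std_rep_def)

lemma sum_std_vec: "(\<Sum>k\<in>{1..5}. std_vec k) = 0"
proof -
  have "{1..5::nat} = {1, 2, 3, 4, 5}"
    by auto
  then have "(\<Sum>k\<in>{1..5}. std_vec k $ i) = 0" for i
    using exhaust_4'[of i] by (auto simp: std_vec_def)
  then show ?thesis
    by (simp add: vec_eq_iff)
qed

lemma std_rep_mult_std_vec:
  assumes p: "p permutes {1..5}" and k: "k \<in> {1..5}"
  shows "std_rep p *v std_vec k = std_vec (p k)"
proof (cases "k = 5")
  case False
  then have "k = 1 \<or> k = 2 \<or> k = 3 \<or> k = 4"
    using k by auto
  then show ?thesis
    by (elim disjE) (simp_all add: vec_eq_iff matrix_vector_mult_def std_rep_def std_vec_def
      sum_UNIV_4)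
next
  case True
  have "std_rep p *v std_vec k = - (std_vec (p 1) + std_vec (p 2) + std_vec (p 3) + std_vec (p 4))"
    using True by (simp add: vec_eq_iff matrix_vector_mult_def std_rep_def std_vec_def sum_UNIV_4)
  also have "\<dots> = std_vec (p 5)"
  proof -
    have "{1..5::nat} = insert 5 {1, 2, 3, 4}"
      by auto
    then have "std_vec (p 1) + std_vec (p 2) + std_vec (p 3) + std_vec (p 4) + std_vec (p 5) = 0"
      using sum.permute[OF p, of std_vec] sum_std_vec by (simp add: ac_simps)
    then show ?thesis
      unfolding neg_eq_iff_add_eq_0 by (simp add: ac_simps)
  qed
  finally show ?thesis
    using True by simp
qed

lemma std_rep_comp:
  assumes "p permutes {1..5}" and "q permutes {1..5}"
  shows "std_rep (p \<circ> q) = std_rep p ** std_rep q"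
proof (rule matrix_eq_columnsI)
  fix j
  have "q (idx j) \<in> {1..5}"
    using idx_range[of j] permutes_in_image[OF assms(2)] by auto
  then show "column j (std_rep (p \<circ> q)) = column j (std_rep p ** std_rep q)"
    by (simp add: column_matrix_mult column_std_rep std_rep_mult_std_vec[OF assms(1)])
qed

lemma std_rep_id: "std_rep id = mat 1"
proof -
  have "std_rep id $ i $ j = mat 1 $ i $ j" for i j
    using idx_range[of j] by (auto simp: std_rep_def std_vec_def mat_def)
  then show ?thesis
    by (simp add: vec_eq_iff)
qed

lemma invertible_std_rep:
  assumes "p permutes {1..5}"
  shows "invertible (std_rep p)"
proof -
  have inv: "inv' p permutes {1..5}"
    using permutes_inv[OF assms] .
  have "std_rep p ** std_rep (inv' p) = mat 1" "std_rep (inv' p) ** std_rep p = mat 1"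
    using std_rep_comp[OF assms inv, symmetric] std_rep_comp[OF inv assms, symmetric]
      permutes_inv_o[OF assms] std_rep_id
    by simp_all
  then show ?thesis
    unfolding invertible_def by blast
qed

lemma std_vec_inj:
  assumes "a \<in> {1..5}" and "b \<in> {1..5}" and "std_vec a = std_vec b"
  shows "a = b"
proof -
  have "std_vec a $ 0 = std_vec b $ 0" "std_vec a $ 1 = std_vec b $ 1"
    "std_vec a $ 2 = std_vec b $ 2" "std_vec a $ 3 = std_vec b $ 3"
    using assms(3) by simp_all
  moreover have "a = 1 \<or> a = 2 \<or> a = 3 \<or> a = 4 \<or> a = 5" "b = 1 \<or> b = 2 \<or> b = 3 \<or> b = 4 \<or> b = 5"
    using assms(1,2) by auto
  ultimately show ?thesis
    by (elim disjE) (simp_all add: std_vec_def)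
qed

lemma std_vec_neq_uminus:
  assumes "a \<in> {1..5}" and "b \<in> {1..5}"
  shows "std_vec a \<noteq> - std_vec b"
proof
  assume eq: "std_vec a = - std_vec b"
  have "std_vec a $ 0 = - std_vec b $ 0" "std_vec a $ 1 = - std_vec b $ 1"
    "std_vec a $ 2 = - std_vec b $ 2" "std_vec a $ 3 = - std_vec b $ 3"
    using eq by simp_all
  moreover have "a = 1 \<or> a = 2 \<or> a = 3 \<or> a = 4 \<or> a = 5" "b = 1 \<or> b = 2 \<or> b = 3 \<or> b = 4 \<or> b = 5"
    using assms by auto
  ultimately show False
    by (elim disjE) (simp_all add: std_vec_def)
qed

lemma std_rep_inj:
  assumes p: "p permutes {1..5}" and q: "q permutes {1..5}" and eq: "std_rep p = std_rep q"
  shows "p = q"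
proof
  fix k
  show "p k = q k"
  proof (cases "k \<in> {1..5}")
    case True
    then have "std_vec (p k) = std_vec (q k)"
      using eq std_rep_mult_std_vec[OF p True] std_rep_mult_std_vec[OF q True] by simp
    then show ?thesis
      using std_vec_inj permutes_in_image[OF p] permutes_in_image[OF q] True by blast
  next
    case False
    then show ?thesis
      using permutes_not_in[OF p] permutes_not_in[OF q] by simp
  qed
qed

lemma std_rep_neq_uminus:
  assumes p: "p permutes {1..5}" and q: "q permutes {1..5}"
  shows "std_rep p \<noteq> - std_rep q"
proof
  assume "std_rep p = - std_rep q"
  then have "std_vec (p 1) = - std_vec (q 1)"
    using std_rep_mult_std_vec[OF p, of 1] std_rep_mult_std_vec[OF q, of 1]
    by (simp add: matrix_neg_mult_vec)
  then show False
    using std_vec_neq_uminus permutes_in_image[OF p] permutes_in_image[OF q] by auto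
qed

lemma carrier_GL4F3: "carrier GL4F3 = {A. invertible A}"
  and mult_GL4F3 [simp]: "mult GL4F3 = (**)"
  and one_GL4F3 [simp]: "one GL4F3 = mat 1"
  by (simp_all add: GL4F3_def)

lemma group_GL4F3: "group GL4F3"
proof (rule groupI)
  show "\<one>\<^bsub>GL4F3\<^esub> \<in> carrier GL4F3"
    by (auto simp: carrier_GL4F3 invertible_def)
  show "\<exists>y\<in>carrier GL4F3. y \<otimes>\<^bsub>GL4F3\<^esub> x = \<one>\<^bsub>GL4F3\<^esub>" if "x \<in> carrier GL4F3" for x
    using that unfolding carrier_GL4F3 invertible_def by auto
qed (auto simp: carrier_GL4F3 invertible_mult matrix_mul_assoc)

lemma carrier_A5xC2: "carrier A5xC2 = carrier (alt_group 5) \<times> {0, 1}"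
  by (auto simp: A5xC2_def carrier_integer_mod_group)

lemma mult_A5xC2 [simp]: "(p, c) \<otimes>\<^bsub>A5xC2\<^esub> (q, d) = (p \<circ> q, (c + d) mod 2)"
  by (simp add: A5xC2_def alt_group_mult)

lemma one_A5xC2: "\<one>\<^bsub>A5xC2\<^esub> = (id, 0)"
  by (simp add: A5xC2_def alt_group_one)

lemma group_A5xC2: "group A5xC2"
  unfolding A5xC2_def by (intro DirProd_group alt_group_is_group group_integer_mod_group)

definition std_rep_C2 :: "(nat \<Rightarrow> nat) \<times> int \<Rightarrow> 3^4^4" where
  "std_rep_C2 x = (if snd x = 0 then std_rep (fst x) else - std_rep (fst x))"

lemma std_rep_C2_hom: "std_rep_C2 \<in> hom A5xC2 GL4F3"
proof (rule homI)
  fix x assume "x \<in> carrier A5xC2"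
  then show "std_rep_C2 x \<in> carrier GL4F3"
    by (auto simp: carrier_A5xC2 std_rep_C2_def carrier_GL4F3 alt_group_carrier
        invertible_std_rep invertible_uminus)
next
  fix x y assume "x \<in> carrier A5xC2" "y \<in> carrier A5xC2"
  then obtain p c q d where x: "x = (p, c)" and y: "y = (q, d)"
    and "p permutes {1..5}" "q permutes {1..5}" "c \<in> {0, 1}" "d \<in> {0, 1}"
    by (auto simp: carrier_A5xC2 alt_group_carrier)
  then show "std_rep_C2 (x \<otimes>\<^bsub>A5xC2\<^esub> y) = std_rep_C2 x \<otimes>\<^bsub>GL4F3\<^esub> std_rep_C2 y"
    by (auto simp: std_rep_C2_def std_rep_comp matrix_neg_mult matrix_mult_neg)
qed

lemma std_rep_C2_inj: "inj_on std_rep_C2 (carrier A5xC2)"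
proof (rule inj_onI)
  fix x y assume "x \<in> carrier A5xC2" "y \<in> carrier A5xC2" and eq: "std_rep_C2 x = std_rep_C2 y"
  then obtain p c q d where x: "x = (p, c)" and y: "y = (q, d)"
    and p: "p permutes {1..5}" and q: "q permutes {1..5}" and "c \<in> {0, 1}" "d \<in> {0, 1}"
    by (auto simp: carrier_A5xC2 alt_group_carrier)
  then consider "c = d" "std_rep p = std_rep q" | "std_rep p = - std_rep q"
    | "std_rep q = - std_rep p"
    using eq by (auto simp: std_rep_C2_def)
  then show "x = y"
    using std_rep_inj[OF p q] std_rep_neq_uminus[OF p q] std_rep_neq_uminus[OF q p] x y
    by cases auto
qed

definition std_subgroup :: "(3^4^4) set" where
  "std_subgroup = std_rep_C2 ` carrier A5xC2"

lemma std_subgroup_iso: "std_subgroup \<in> subgroups_iso GL4F3 A5xC2"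
proof -
  have "group_hom A5xC2 GL4F3 std_rep_C2"
    by (simp add: group_hom_def group_hom_axioms_def group_A5xC2 group_GL4F3 std_rep_C2_hom)
  then have "subgroup std_subgroup GL4F3"
    unfolding std_subgroup_def by (rule group_hom.img_is_subgroup)
  moreover have "std_rep_C2 \<in> iso A5xC2 (GL4F3\<lparr>carrier := std_subgroup\<rparr>)"
    using std_rep_C2_hom std_rep_C2_inj
    by (auto simp: iso_def hom_def bij_betw_def std_subgroup_def)
  then have "GL4F3\<lparr>carrier := std_subgroup\<rparr> \<cong> A5xC2"
    using group.iso_sym[OF group_A5xC2] is_isoI by blast
  ultimately show ?thesis
    unfolding subgroups_iso_def by blast
qed

lemma alt_group_mono: "m \<le> n \<Longrightarrow> p \<in> carrier (alt_group m) \<Longrightarrow> p \<in> carrier (alt_group n)"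
  by (auto simp: alt_group_carrier elim!: permutes_subset)

lemma alt_group_id: "id \<in> carrier (alt_group n)"
  using monoid.one_closed[OF group.is_monoid[OF alt_group_is_group]] by (simp add: alt_group_one)

lemma alt_group_comp_closed:
  "p \<in> carrier (alt_group n) \<Longrightarrow> q \<in> carrier (alt_group n) \<Longrightarrow> p \<circ> q \<in> carrier (alt_group n)"
  using monoid.m_closed[OF group.is_monoid[OF alt_group_is_group], of p n q]
    by (simp add: alt_group_mult)

lemma alt_group_funpow_closed: "p \<in> carrier (alt_group n) \<Longrightarrow> p ^^ k \<in> carrier (alt_group n)"
  by (induction k) (simp_all add: alt_group_id alt_group_comp_closed)

lemma alt_group_fix_last:
  assumes "p \<in> carrier (alt_group (Suc n))" and "p (Suc n) = Suc n"
  shows "p \<in> carrier (alt_group n)"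
proof -
  have "p permutes {1..Suc n}"
    using assms(1) by (simp add: alt_group_carrier)
  then have "p permutes {1..n}"
  proof (rule permutes_superset)
    fix x :: nat
    assume "x \<in> {1..Suc n} - {1..n}"
    then have "x = Suc n"
      by auto
    then show "p x = x"
      using assms(2) by simp
  qed
  then show ?thesis
    using assms(1) by (simp add: alt_group_carrier)
qed

definition five_cycle :: "nat \<Rightarrow> nat" where
  "five_cycle = Transposition.transpose 1 5 \<circ> Transposition.transpose 1 4 \<circ>
      Transposition.transpose 1 3 \<circ> Transposition.transpose (1::nat) 2"

definition klein_x :: "nat \<Rightarrow> nat" where
  "klein_x = Transposition.transpose 1 2 \<circ> Transposition.transpose (3::nat) 4"

definition klein_y :: "nat \<Rightarrow> nat" where
  "klein_y = Transposition.transpose 1 3 \<circ> Transposition.transpose (2::nat) 4"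

definition three_cycle :: "nat \<Rightarrow> nat" where
  "three_cycle = Transposition.transpose 2 4 \<circ> Transposition.transpose (2::nat) 3"

lemma five_cycle_alt_group: "five_cycle \<in> carrier (alt_group 5)"
proof -
  have "five_cycle permutes {1..5}"
    unfolding five_cycle_def by (intro permutes_compose permutes_swap_id) auto
  moreover have "evenperm five_cycle"
    by (simp add: five_cycle_def evenperm_comp permutation_swap_id permutation_compose
      evenperm_swap)
  ultimately show ?thesis
    by (simp add: alt_group_carrier)
qed

lemma klein_x_alt_group: "klein_x \<in> carrier (alt_group 5)"
  and klein_y_alt_group: "klein_y \<in> carrier (alt_group 5)"
  and three_cycle_alt_group: "three_cycle \<in> carrier (alt_group 5)"
  unfolding klein_x_def klein_y_def three_cycle_def alt_group_carrier
  by (auto intro!: permutes_compose permutes_swap_id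
      simp: evenperm_comp permutation_swap_id permutation_compose evenperm_swap)

lemma funpow_small_apply:
  "(f ^^ 2) x = f (f x)" "(f ^^ 3) x = f (f (f x))" "(f ^^ 4) x = f (f (f (f x)))"
  "(f ^^ 5) x = f (f (f (f (f x))))"
  by (simp_all add: numeral_eq_Suc)

lemma five_cycle_simps [simp]:
  "five_cycle 1 = 2" "five_cycle 2 = 3" "five_cycle 3 = 4" "five_cycle 4 = 5" "five_cycle 5 = 1"
  "five_cycle (Suc 0) = 2"
  by (simp_all add: five_cycle_def Transposition.transpose_def)

lemma five_cycle_funpow_5: "five_cycle ^^ 5 = id"
proof
  fix n
  show "(five_cycle ^^ 5) n = id n"
  proof (cases "n \<in> {1..5}")
    case True
    then have "n = 1 \<or> n = 2 \<or> n = 3 \<or> n = 4 \<or> n = 5"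
      by auto
    then show ?thesis
      by (elim disjE) (simp_all add: funpow_small_apply)
  next
    case False
    then have "five_cycle n = n"
      by (auto simp: five_cycle_def Transposition.transpose_def)
    then show ?thesis
      by (simp add: funpow_small_apply)
  qed
qed

lemma five_cycle_funpow_5_eq: "k \<in> {1..5} \<Longrightarrow> (five_cycle ^^ k) 5 = k"
proof -
  assume "k \<in> {1..5}"
  then have "k = 1 \<or> k = 2 \<or> k = 3 \<or> k = 4 \<or> k = 5"
    by auto
  then show ?thesis
    by (elim disjE) (simp_all add: funpow_small_apply)
qed

lemma klein_relations:
  "klein_x \<circ> klein_x = id" "klein_y \<circ> klein_y = id" "klein_y \<circ> klein_x = klein_x \<circ> klein_y"
  "three_cycle \<circ> klein_x = klein_y \<circ> three_cycle"
  "three_cycle \<circ> (klein_x \<circ> klein_y) = klein_x \<circ> three_cycle"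
  by (simp_all add: fun_eq_iff klein_x_def klein_y_def three_cycle_def Transposition.transpose_def)

lemma klein_x_neq_id: "klein_x \<noteq> id"
proof
  assume "klein_x = id"
  then have "klein_x 1 = 1"
    by simp
  then show False
    by (simp add: klein_x_def Transposition.transpose_def)
qed

definition double_transposition :: "(nat \<Rightarrow> nat) \<Rightarrow> bool" where
  "double_transposition q \<longleftrightarrow> q permutes {1..4} \<and> q \<circ> q = id \<and> (\<forall>i\<in>{1..4}. q i \<noteq> i)"

lemma double_transposition_klein: "double_transposition klein_x" "double_transposition klein_y"
  by (auto simp: double_transposition_def klein_x_def klein_y_def fun_eq_iff
    Transposition.transpose_def
      intro!: permutes_compose permutes_swap_id)

lemma double_transposition_cases:
  assumes "double_transposition q"
  shows "q \<in> {klein_x, klein_y, klein_x \<circ> klein_y}"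
proof -
  have perm: "q permutes {1..4}" and inv: "\<And>n. q (q n) = n" and no_fix: "\<And>i. i \<in> {1..4} \<Longrightarrow> q i \<noteq> i"
    using assms by (auto simp: double_transposition_def fun_eq_iff)
  have q_range: "q i \<in> {1..4} - {i}" if "i \<in> {1..4}" for i
    using that permutes_in_image[OF perm] no_fix by auto
  have q1: "q 1 \<in> {2, 3, 4}" and q2: "q 2 \<in> {1, 3, 4}" and q3: "q 3 \<in> {1, 2, 4}"
    using q_range[of 1] q_range[of 2] q_range[of 3] by auto
  have "q 1 = 2 \<Longrightarrow> q 2 = 1 \<and> q 3 = 4 \<and> q 4 = 3"
    using q3 inv[of 1] inv[of 3] by auto
  moreover have "q 1 = 3 \<Longrightarrow> q 3 = 1 \<and> q 2 = 4 \<and> q 4 = 2"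
    using q2 inv[of 1] inv[of 2] by auto
  moreover have "q 1 = 4 \<Longrightarrow> q 4 = 1 \<and> q 2 = 3 \<and> q 3 = 2"
    using q2 inv[of 1] inv[of 2] by auto
  ultimately have q_values: "(q 1, q 2, q 3, q 4) \<in> {(2, 1, 4, 3), (3, 4, 1, 2), (4, 3, 2, 1)}"
    using q1 by auto
  have eqI: "q = r" if "r permutes {1..4}" "q 1 = r 1" "q 2 = r 2" "q 3 = r 3" "q 4 = r 4" for r
  proof
    fix n
    show "q n = r n"
      using that permutes_not_in[OF perm, of n] permutes_not_in[OF that(1), of n]
      by (cases "n \<in> {1..4}") (auto simp: numeral_eq_Suc le_Suc_eq)
  qed
  have kx: "klein_x permutes {1..4}" and ky: "klein_y permutes {1..4}"
    using double_transposition_klein by (simp_all add: double_transposition_def)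
  from q_values consider "q 1 = 2" "q 2 = 1" "q 3 = 4" "q 4 = 3"
    | "q 1 = 3" "q 2 = 4" "q 3 = 1" "q 4 = 2"
    | "q 1 = 4" "q 2 = 3" "q 3 = 2" "q 4 = 1"
    by auto
  then show ?thesis
  proof cases
    case 1
    then have "q = klein_x"
      by (intro eqI kx) (simp_all add: klein_x_def Transposition.transpose_def)
    then show ?thesis by simp
  next
    case 2
    then have "q = klein_y"
      by (intro eqI ky) (simp_all add: klein_y_def Transposition.transpose_def)
    then show ?thesis by simp
  next
    case 3
    then have "q = klein_x \<circ> klein_y"
      by (intro eqI permutes_compose[OF ky kx]) (simp_all add: klein_x_def klein_y_def
        Transposition.transpose_def)
    then show ?thesis by simp
  qed
qed

lemma double_transposition_conj:
  assumes "q permutes {1..4}" and "double_transposition u"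
  shows "double_transposition (inv' q \<circ> u \<circ> q)"
proof -
  have u: "u permutes {1..4}" "u \<circ> u = id" "\<And>i. i \<in> {1..4} \<Longrightarrow> u i \<noteq> i"
    using assms(2) by (auto simp: double_transposition_def)
  have "(inv' q \<circ> u \<circ> q) \<circ> (inv' q \<circ> u \<circ> q) = inv' q \<circ> (u \<circ> u) \<circ> q"
    using permutes_inv_o(1)[OF assms(1)] by (simp add: fun_eq_iff)
  also have "\<dots> = id"
    using u(2) permutes_inv_o(2)[OF assms(1)] by simp
  finally have "(inv' q \<circ> u \<circ> q) \<circ> (inv' q \<circ> u \<circ> q) = id" .
  moreover have "(inv' q \<circ> u \<circ> q) i \<noteq> i" if "i \<in> {1..4}" for i
  proof
    assume "(inv' q \<circ> u \<circ> q) i = i"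
    then have "u (q i) = q i"
      using permutes_inverses(1)[OF assms(1)] by (metis comp_apply)
    then show False
      using u(3)[of "q i"] permutes_in_image[OF assms(1)] that by simp
  qed
  moreover have "inv' q \<circ> u \<circ> q permutes {1..4}"
    by (intro permutes_compose permutes_inv assms(1) u(1))
  ultimately show ?thesis
    by (simp add: double_transposition_def)
qed

lemma three_cycles_4:
  assumes "q \<in> three_cycles 4"
  shows "q permutes {1..4}" and "q \<circ> q \<circ> q = id" and "q \<in> carrier (alt_group 4)"
proof -
  obtain cs where cs: "q = cycle_of_list cs" "cycle cs" "length cs = 3" "set cs \<subseteq> {1..4}"
    using assms by auto
  obtain a b c where abc: "cs = [a, b, c]"
    using stupid_lemma[OF cs(3)] by auto
  show "q permutes {1..4}"
    using permutes_subset[OF cycle_permutes cs(4)] cs(1) by simp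
  show "q \<circ> q \<circ> q = id"
    using cs(2) unfolding cs(1) abc by (auto simp: fun_eq_iff Transposition.transpose_def)
  show "q \<in> carrier (alt_group 4)"
    using three_cycles_incl assms by blast
qed

section \<open>Faithful representations of \<open>A\<^sub>5\<close> on \<open>F\<^sub>3\<^sup>4\<close>\<close>

lemma mult_cube_eq_81:
  assumes "(a::nat) * b ^ 3 = 81"
  shows "b = 1 \<or> (b = 3 \<and> a = 3)"
proof -
  have "a \<ge> 1"
    using assms by (cases a) auto
  then have "b ^ 3 \<le> 81"
    using assms by (metis le_add2 mult.commute mult_le_mono2 nat_mult_1_right le_Suc_ex)
  have "b \<le> 4"
  proof (rule ccontr)
    assume "\<not> b \<le> 4"
    then have "5 ^ 3 \<le> b ^ 3"
      by (intro power_mono) auto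
    then show False
      using \<open>b ^ 3 \<le> 81\<close> by simp
  qed
  moreover have "b \<noteq> 0"
    using assms by (cases b) auto
  ultimately have "b = 1 \<or> b = 2 \<or> b = 3 \<or> b = 4"
    by auto
  then show ?thesis
    using assms by (elim disjE) (simp_all, presburger+)
qed

definition signed :: "bool \<Rightarrow> 3^4 \<Rightarrow> 3^4" where
  "signed b w = (if b then w else - w)"

locale faithful_A5_rep =
  fixes \<psi> :: "(nat \<Rightarrow> nat) \<Rightarrow> 3^4^4"
  assumes hom: "\<psi> \<in> hom (alt_group 5) GL4F3"
    and inj: "inj_on \<psi> (carrier (alt_group 5))"
begin

definition act :: "(nat \<Rightarrow> nat) \<Rightarrow> 3^4 \<Rightarrow> 3^4" where
  "act p w = \<psi> p *v w"

lemma act_comp: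
  "p \<in> carrier (alt_group 5) \<Longrightarrow> q \<in> carrier (alt_group 5) \<Longrightarrow> act (p \<circ> q) w = act p (act q w)"
  using hom_mult[OF hom, of p q] by (simp add: act_def alt_group_mult matrix_vector_mul_assoc)

lemma act_id [simp]: "act id w = w"
proof -
  have "group_hom (alt_group 5) GL4F3 \<psi>"
    by (simp add: group_hom_def group_hom_axioms_def alt_group_is_group group_GL4F3 hom)
  then show ?thesis
    using group_hom.hom_one by (fastforce simp: act_def alt_group_one)
qed

lemma additive_act: "Modules.additive (act p)"
  by (simp add: Modules.additive_def act_def matrix_vector_right_distrib)

lemma act_uminus: "act p (- w) = - act p w"
  by (rule Modules.additive.minus[OF additive_act])

lemma act_inv:
  assumes "p \<in> carrier (alt_group 5)"
  shows "act (inv' p) (act p w) = w"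
  using act_comp[OF alt_group_inv_closed[OF assms] assms] permutes_inv_o(2)[of p "{1..5}"] assms
  by (simp add: alt_group_carrier)

lemma act_inj: "p \<in> carrier (alt_group 5) \<Longrightarrow> act p v = act p w \<Longrightarrow> v = w"
  by (metis act_inv)

lemma act_eq_idD:
  assumes "p \<in> carrier (alt_group 5)" and "\<And>w. act p w = w"
  shows "p = id"
proof -
  have "\<psi> p = \<psi> id"
    using assms(2) act_id by (simp add: act_def matrix_eq)
  then show ?thesis
    using inj assms(1) alt_group_id by (metis inj_onD)
qed

lemma act_funpow: "p \<in> carrier (alt_group 5) \<Longrightarrow> act p ^^ k = act (p ^^ k)"
  by (induction k) (simp_all add: fun_eq_iff act_comp alt_group_funpow_closed)

lemma act_five_cycle_funpow_5: "act five_cycle ^^ 5 = id"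
  by (simp add: act_funpow five_cycle_alt_group five_cycle_funpow_5 fun_eq_iff)

lemma act_five_cycle_neq_id: "act five_cycle \<noteq> id"
proof
  assume "act five_cycle = id"
  then have "five_cycle = id"
    by (simp add: act_eq_idD[OF five_cycle_alt_group])
  then show False
    using five_cycle_simps(1) by simp
qed

lemma act_add: "act p (v + w) = act p v + act p w"
  by (rule Modules.additive.add[OF additive_act])

lemma act_diff: "act p (v - w) = act p v - act p w"
  by (rule Modules.additive.diff[OF additive_act])

lemma act_0 [simp]: "act p 0 = 0"
  by (rule Modules.additive.zero[OF additive_act])

lemma act_signed: "act p (signed b w) = signed b (act p w)"
  by (simp add: signed_def act_uminus)

lemma act_neq_0: "p \<in> carrier (alt_group 5) \<Longrightarrow> w \<noteq> 0 \<Longrightarrow> act p w \<noteq> 0"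
  using act_inj[of p w 0] by auto

lemma sum_act_five_cycle: "(\<Sum>i<5. (act five_cycle ^^ i) w) = 0"
  by (rule orbit_sum_eq_0[OF additive_act act_five_cycle_funpow_5 act_five_cycle_neq_id])

lemma act_five_cycle_fixpoint: "act five_cycle w = w \<Longrightarrow> w = 0"
  using sum_funpow_5_fixpoint[of "act five_cycle" w] sum_act_five_cycle[of w] by simp

lemma five_cycle_stable_eq_0_or_UNIV:
  assumes "0 \<in> S" and "\<And>a b. a \<in> S \<Longrightarrow> b \<in> S \<Longrightarrow> a + b \<in> S" and "act five_cycle ` S \<subseteq> S"
  shows "S = {0} \<or> S = UNIV"
  using subgroup_of_stable_eq_0_or_UNIV[OF additive_act act_five_cycle_funpow_5 assms(3,1,2)]
    act_five_cycle_fixpoint by blast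

lemma act_klein [simp]:
  "act klein_x (act klein_x w) = w" "act klein_y (act klein_y w) = w"
  "act klein_y (act klein_x w) = act klein_x (act klein_y w)"
proof -
  show "act klein_x (act klein_x w) = w"
    using act_comp[OF klein_x_alt_group klein_x_alt_group, of w] klein_relations(1) by simp
  show "act klein_y (act klein_y w) = w"
    using act_comp[OF klein_y_alt_group klein_y_alt_group, of w] klein_relations(2) by simp
  show "act klein_y (act klein_x w) = act klein_x (act klein_y w)"
    using act_comp[OF klein_x_alt_group klein_y_alt_group, of w]
      act_comp[OF klein_y_alt_group klein_x_alt_group, of w]
      klein_relations(3) by simp
qed

lemma act_three_cycle_klein:
  "act three_cycle (act klein_x w) = act klein_y (act three_cycle w)"
  "act three_cycle (act klein_x (act klein_y w)) = act klein_x (act three_cycle w)"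
proof -
  show "act three_cycle (act klein_x w) = act klein_y (act three_cycle w)"
    using act_comp[OF three_cycle_alt_group klein_x_alt_group, of w]
      act_comp[OF klein_y_alt_group three_cycle_alt_group, of w]
      klein_relations(4) by simp
  show "act three_cycle (act klein_x (act klein_y w)) = act klein_x (act three_cycle w)"
    using act_comp[OF three_cycle_alt_group
        alt_group_comp_closed[OF klein_x_alt_group klein_y_alt_group], of w]
      act_comp[OF klein_x_alt_group three_cycle_alt_group, of w]
      act_comp[OF klein_x_alt_group klein_y_alt_group, of w]
      klein_relations(5) by simp
qed

definition klein_eigenspace :: "bool \<Rightarrow> bool \<Rightarrow> (3^4) set" where
  "klein_eigenspace b1 b2 = {w. act klein_x w = signed b1 w \<and> act klein_y w = signed b2 w}"

(* As 4 = 1 in F_3, this is the projection (1 +- X)(1 +- Y)/4 onto a joint eigenspace. *)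
definition klein_proj :: "bool \<Rightarrow> bool \<Rightarrow> 3^4 \<Rightarrow> 3^4" where
  "klein_proj b1 b2 w =
    w + signed b1 (act klein_x w) + signed b2 (act klein_y w)
      + signed (b1 = b2) (act klein_x (act klein_y w))"

lemma klein_proj_in: "klein_proj b1 b2 w \<in> klein_eigenspace b1 b2"
  by (cases b1; cases b2)
    (simp_all add: klein_eigenspace_def klein_proj_def signed_def act_add act_uminus act_diff
      algebra_simps)

lemma klein_proj_id: "w \<in> klein_eigenspace b1 b2 \<Longrightarrow> klein_proj b1 b2 w = w"
  by (cases b1; cases b2)
    (simp_all add: klein_eigenspace_def klein_proj_def signed_def act_add act_uminus act_diff
      algebra_simps vec3_numerals)

lemma klein_proj_other:
  "w \<in> klein_eigenspace b1' b2' \<Longrightarrow> (b1', b2') \<noteq> (b1, b2) \<Longrightarrow> klein_proj b1 b2 w = 0"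
  by (cases b1; cases b2; cases b1'; cases b2')
    (simp_all add: klein_eigenspace_def klein_proj_def signed_def act_add act_uminus act_diff
      algebra_simps vec3_numerals)

lemma sum_klein_proj:
  "klein_proj True True w + klein_proj True False w
     + klein_proj False True w + klein_proj False False w = w"
  by (simp add: klein_proj_def signed_def algebra_simps vec3_numerals)

lemma klein_proj_add: "klein_proj b1 b2 (v + w) = klein_proj b1 b2 v + klein_proj b1 b2 w"
  by (cases b1; cases b2) (simp_all add: klein_proj_def signed_def act_add act_uminus act_diff
    algebra_simps)

lemma card_klein_eigenspaces:
  "card (klein_eigenspace True True) * card (klein_eigenspace True False)
    * card (klein_eigenspace False True) * card (klein_eigenspace False False) = 81"
proof -
  let ?E = klein_eigenspace
  let ?P = "?E True True \<times> ?E True False \<times> ?E False True \<times> ?E False False"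
  define f where "f = (\<lambda>(a::3^4, b::3^4, c::3^4, d::3^4). a + b + c + d)"
  have proj: "klein_proj True True (f t) = fst t" "klein_proj True False (f t) = fst (snd t)"
    "klein_proj False True (f t) = fst (snd (snd t))"
    "klein_proj False False (f t) = snd (snd (snd t))"
    if "t \<in> ?P" for t
    using that unfolding f_def by (auto simp: klein_proj_add klein_proj_id klein_proj_other)
  have "inj_on f ?P"
  proof (rule inj_onI)
    show "x = y" if "x \<in> ?P" "y \<in> ?P" "f x = f y" for x y
      using proj[OF that(1)] proj[OF that(2)] that(3) by (metis prod.collapse)
  qed
  moreover have "w \<in> f ` ?P" for w
  proof
    show "w = f (klein_proj True True w, klein_proj True False w, klein_proj False True w,
        klein_proj False False w)"
      unfolding f_def using sum_klein_proj[of w] by simp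
  qed (simp add: klein_proj_in)
  ultimately have "bij_betw f ?P UNIV"
    by (auto simp: bij_betw_def)
  then have "card ?P = CARD(3^4)"
    by (rule bij_betw_same_card)
  then show ?thesis
    by (simp add: card_cartesian_product CARD_vec mult.assoc)
qed

lemma act_three_cycle_klein_eigenspace:
  assumes "w \<in> klein_eigenspace b1 b2"
  shows "act three_cycle w \<in> klein_eigenspace (b1 = b2) b1"
proof -
  have "act klein_y (act three_cycle w) = signed b1 (act three_cycle w)"
    using assms act_three_cycle_klein(1)[of w]
    by (simp add: klein_eigenspace_def act_signed)
  moreover have "act klein_x (act three_cycle w) = signed (b1 = b2) (act three_cycle w)"
    using assms act_three_cycle_klein(2)[of w]
    by (cases b1; cases b2) (simp_all add: klein_eigenspace_def signed_def act_uminus)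
  ultimately show ?thesis
    by (simp add: klein_eigenspace_def)
qed

lemma card_klein_eigenspace_le:
  "card (klein_eigenspace b1 b2) \<le> card (klein_eigenspace (b1 = b2) b1)"
proof (rule card_inj_on_le)
  show "inj_on (act three_cycle) (klein_eigenspace b1 b2)"
    using act_inj[OF three_cycle_alt_group] by (meson inj_onI)
  show "act three_cycle ` klein_eigenspace b1 b2 \<subseteq> klein_eigenspace (b1 = b2) b1"
    using act_three_cycle_klein_eigenspace by blast
qed simp

lemma zero_in_klein_eigenspace: "0 \<in> klein_eigenspace b1 b2"
  by (simp add: klein_eigenspace_def signed_def)

(* The three-cycle maps the eigenspaces with signs (+,-), (-,+), (-,-) injectively into
   each other in a cycle, so they have a common size b. *)
lemma card_klein_fixed: "card (klein_eigenspace True True) = 3"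
proof -
  define b where "b = card (klein_eigenspace True False)"
  have eq: "card (klein_eigenspace False True) = b" "card (klein_eigenspace False False) = b"
    using card_klein_eigenspace_le[of True False] card_klein_eigenspace_le[of False True]
      card_klein_eigenspace_le[of False False] b_def
    by auto
  have "card (klein_eigenspace True True) * b ^ 3 = 81"
    using card_klein_eigenspaces eq b_def by (simp add: power3_eq_cube mult.assoc)
  then have "b = 1 \<or> (b = 3 \<and> card (klein_eigenspace True True) = 3)"
    by (rule mult_cube_eq_81)
  moreover have "b \<noteq> 1"
  proof
    assume "b = 1"
    then have "klein_eigenspace b1 b2 = {0}" if "(b1, b2) \<noteq> (True, True)" for b1 b2
      using that eq b_def zero_in_klein_eigenspace[of b1 b2]
      by (cases b1; cases b2) (auto simp: card_1_singleton_iff)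
    then have "klein_proj True True w = w" for w
      using sum_klein_proj[of w] klein_proj_in[of True False w] klein_proj_in[of False True w]
        klein_proj_in[of False False w]
      by auto
    then have "act klein_x w = w" for w
      using klein_proj_in[of True True w] by (simp add: klein_eigenspace_def signed_def)
    then have "klein_x = id"
      by (rule act_eq_idD[OF klein_x_alt_group])
    then show False
      using klein_x_neq_id by simp
  qed
  ultimately show ?thesis
    by simp
qed

definition klein_fixed_vec :: "3^4" where
  "klein_fixed_vec = (SOME v. v \<in> klein_eigenspace True True \<and> v \<noteq> 0)"

lemma klein_fixed_vec: "klein_fixed_vec \<in> klein_eigenspace True True" "klein_fixed_vec \<noteq> 0"
proof -
  have "\<not> klein_eigenspace True True \<subseteq> {0}"
    using card_mono[of "{0}" "klein_eigenspace True True"] card_klein_fixed by auto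
  then have "\<exists>v. v \<in> klein_eigenspace True True \<and> v \<noteq> 0"
    by blast
  then have "klein_fixed_vec \<in> klein_eigenspace True True \<and> klein_fixed_vec \<noteq> 0"
    unfolding klein_fixed_vec_def by (rule someI_ex)
  then show "klein_fixed_vec \<in> klein_eigenspace True True" "klein_fixed_vec \<noteq> 0"
    by simp_all
qed

lemma klein_fixed_vec_neq_uminus: "klein_fixed_vec \<noteq> - klein_fixed_vec"
proof
  assume "klein_fixed_vec = - klein_fixed_vec"
  then have "klein_fixed_vec + klein_fixed_vec = 0"
    by (metis add.right_inverse)
  then show False
    using klein_fixed_vec(2) vec3_add_self_eq_0_iff by blast
qed

lemma klein_eigenspace_fixed: "klein_eigenspace True True = {0, klein_fixed_vec, - klein_fixed_vec}"
proof -
  have "- klein_fixed_vec \<in> klein_eigenspace True True"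
    using klein_fixed_vec(1) by (simp add: klein_eigenspace_def signed_def act_uminus)
  then have sub: "{0, klein_fixed_vec, - klein_fixed_vec} \<subseteq> klein_eigenspace True True"
    using klein_fixed_vec(1) zero_in_klein_eigenspace by blast
  have "card {0, klein_fixed_vec, - klein_fixed_vec} = 3"
    using klein_fixed_vec(2) klein_fixed_vec_neq_uminus by simp
  then show ?thesis
    by (intro card_subset_eq[OF finite sub, symmetric]) (simp add: card_klein_fixed)
qed

lemma act_double_transposition_fixed:
  assumes "double_transposition u"
  shows "u \<in> carrier (alt_group 5)" and "act u klein_fixed_vec = klein_fixed_vec"
proof -
  have x: "act klein_x klein_fixed_vec = klein_fixed_vec"
    and y: "act klein_y klein_fixed_vec = klein_fixed_vec"
    using klein_fixed_vec(1) by (simp_all add: klein_eigenspace_def signed_def)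
  from double_transposition_cases[OF assms]
  consider "u = klein_x" | "u = klein_y" | "u = klein_x \<circ> klein_y"
    by blast
  then show "u \<in> carrier (alt_group 5)" and "act u klein_fixed_vec = klein_fixed_vec"
    by (cases; simp add: klein_x_alt_group klein_y_alt_group alt_group_comp_closed act_comp x y)+
qed

(* A three-cycle normalises the Klein group, so it preserves the fixed line {0, v, -v};
   having order 3, it cannot act on it as -1. *)
lemma act_three_cycle_fixed:
  assumes q: "q \<in> three_cycles 4"
  shows "act q klein_fixed_vec = klein_fixed_vec"
proof -
  let ?v = klein_fixed_vec
  have qp: "q permutes {1..4}" and q3: "q \<circ> q \<circ> q = id" and q5: "q \<in> carrier (alt_group 5)"
    using three_cycles_4[OF q] alt_group_mono[of 4 5, simplified] by auto
  have commute: "act u (act q ?v) = act q ?v" if "double_transposition u" for u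
  proof -
    let ?u' = "inv' q \<circ> u \<circ> q"
    have u': "double_transposition ?u'"
      by (rule double_transposition_conj[OF qp that])
    have "q \<circ> ?u' = (q \<circ> inv' q) \<circ> u \<circ> q"
      by (simp add: comp_assoc)
    also have "\<dots> = u \<circ> q"
      using permutes_inv_o(1)[OF qp] by simp
    finally have "act u (act q ?v) = act q (act ?u' ?v)"
      using act_comp[OF act_double_transposition_fixed(1)[OF that] q5]
        act_comp[OF q5 act_double_transposition_fixed(1)[OF u']] by simp
    then show ?thesis
      using act_double_transposition_fixed(2)[OF u'] by simp
  qed
  have "act q ?v \<in> klein_eigenspace True True"
    using commute double_transposition_klein by (simp add: klein_eigenspace_def signed_def)
  moreover have "act q ?v \<noteq> 0"
    using act_neq_0[OF q5 klein_fixed_vec(2)] .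
  moreover have "act q ?v \<noteq> - ?v"
  proof
    assume "act q ?v = - ?v"
    then have "act (q \<circ> q \<circ> q) ?v = - ?v"
      using act_comp[OF alt_group_comp_closed[OF q5 q5] q5] act_comp[OF q5 q5]
        by (simp add: act_uminus)
    then show False
      using q3 klein_fixed_vec_neq_uminus by simp
  qed
  ultimately show ?thesis
    using klein_eigenspace_fixed by blast
qed

lemma act_alt_group_4_fixed:
  assumes "p \<in> carrier (alt_group 4)"
  shows "act p klein_fixed_vec = klein_fixed_vec"
proof -
  have "p \<in> generate (alt_group 4) (three_cycles 4)"
    using assms alt_group_carrier_as_three_cycles by blast
  then show ?thesis
  proof (induction p rule: generate.induct)
    case one
    then show ?case
      using act_id by (simp add: alt_group_one id_def)
  next
    case (incl q)
    then show ?case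
      by (rule act_three_cycle_fixed)
  next
    case (inv q)
    have q4: "q \<in> carrier (alt_group 4)"
      using three_cycles_4(3)[OF inv] .
    have "act (inv' q) klein_fixed_vec = act (inv' q) (act q klein_fixed_vec)"
      using act_three_cycle_fixed[OF inv] by simp
    also have "\<dots> = klein_fixed_vec"
      using act_inv[OF alt_group_mono[of 4 5, simplified, OF q4]] by simp
    finally show ?case
      using alt_group_inv_equality[OF q4] by simp
  next
    case (eng q1 q2)
    have "q1 \<in> carrier (alt_group 4)" "q2 \<in> carrier (alt_group 4)"
      using eng.hyps alt_group_carrier_as_three_cycles by blast+
    then have "act (q1 \<circ> q2) klein_fixed_vec = act q1 (act q2 klein_fixed_vec)"
      using act_comp alt_group_mono[of 4 5, simplified] by blast
    also have "\<dots> = klein_fixed_vec"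
      using eng.IH by simp
    finally show ?case
      by (simp only: alt_group_mult)
  qed
qed

definition orbit_vec :: "nat \<Rightarrow> 3^4" where
  "orbit_vec k = act (five_cycle ^^ k) klein_fixed_vec"

lemma act_orbit_vec:
  assumes p: "p \<in> carrier (alt_group 5)" and j: "j \<in> {1..5}"
  shows "act p (orbit_vec j) = orbit_vec (p j)"
proof -
  define s where "s = five_cycle ^^ p j"
  define t where "t = five_cycle ^^ j"
  have s5: "s \<in> carrier (alt_group 5)" and t5: "t \<in> carrier (alt_group 5)"
    unfolding s_def t_def using alt_group_funpow_closed[OF five_cycle_alt_group] by auto
  have sp: "s permutes {1..5}"
    using s5 by (simp add: alt_group_carrier)
  have pj: "p j \<in> {1..5}"
    using p j permutes_in_image[of p "{1..5}"] by (simp add: alt_group_carrier)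
  define \<tau> where "\<tau> = inv' s \<circ> p \<circ> t"
  have \<tau>5: "\<tau> \<in> carrier (alt_group 5)"
    unfolding \<tau>_def by (intro alt_group_comp_closed alt_group_inv_closed s5 p t5)
  have "\<tau> 5 = inv' s (s 5)"
    using five_cycle_funpow_5_eq[OF j] five_cycle_funpow_5_eq[OF pj]
      by (simp add: \<tau>_def s_def t_def)
  then have "\<tau> 5 = 5"
    using permutes_inverses(2)[OF sp] by simp
  then have \<tau>4: "\<tau> \<in> carrier (alt_group 4)"
    by (rule alt_group_fix_last[of _ 4, simplified, OF \<tau>5])
  have "s \<circ> \<tau> = (s \<circ> inv' s) \<circ> p \<circ> t"
    by (simp add: \<tau>_def comp_assoc)
  then have s\<tau>: "s \<circ> \<tau> = p \<circ> t"
    using permutes_inv_o(1)[OF sp] by simp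
  have "act p (orbit_vec j) = act (s \<circ> \<tau>) klein_fixed_vec"
    using act_comp[OF p t5] s\<tau> by (simp add: orbit_vec_def t_def)
  also have "\<dots> = act s klein_fixed_vec"
    using act_comp[OF s5 \<tau>5] act_alt_group_4_fixed[OF \<tau>4] by simp
  finally show ?thesis
    by (simp add: orbit_vec_def s_def)
qed

lemma orbit_vec_5: "orbit_vec 5 = - (orbit_vec 1 + orbit_vec 2 + orbit_vec 3 + orbit_vec 4)"
proof -
  let ?g = "act five_cycle"
  have orbit_vec: "orbit_vec k = (?g ^^ k) klein_fixed_vec" for k
    by (simp add: orbit_vec_def act_funpow[OF five_cycle_alt_group])
  have "orbit_vec 5 = klein_fixed_vec"
    by (simp add: orbit_vec act_five_cycle_funpow_5)
  moreover have "klein_fixed_vec + orbit_vec 1 + orbit_vec 2 + orbit_vec 3 + orbit_vec 4 = 0"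
    using sum_act_five_cycle[of klein_fixed_vec] by (simp add: sum_lessThan_5 orbit_vec)
  ultimately show ?thesis
    unfolding eq_neg_iff_add_eq_0 by (simp add: ac_simps)
qed

definition intertwiner :: "3^4^4" where
  "intertwiner = (\<chi> i j. orbit_vec (idx j) $ i)"

lemma column_intertwiner: "column j intertwiner = orbit_vec (idx j)"
  by (simp add: vec_eq_iff column_def intertwiner_def)

lemma intertwiner_std_vec:
  assumes "k \<in> {1..5}"
  shows "intertwiner *v std_vec k = orbit_vec k"
proof (cases "k = 5")
  case False
  then have "k = 1 \<or> k = 2 \<or> k = 3 \<or> k = 4"
    using assms by auto
  then show ?thesis
    by (elim disjE) (simp_all add: vec_eq_iff matrix_vector_mult_def intertwiner_def std_vec_def
      sum_UNIV_4)
next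
  case True
  have "intertwiner *v std_vec 5 = - (orbit_vec 1 + orbit_vec 2 + orbit_vec 3 + orbit_vec 4)"
    by (simp add: vec_eq_iff matrix_vector_mult_def intertwiner_def std_vec_def sum_UNIV_4
      algebra_simps)
  then show ?thesis
    using True orbit_vec_5 by simp
qed

lemma intertwiner_intertwines:
  assumes p: "p \<in> carrier (alt_group 5)"
  shows "\<psi> p ** intertwiner = intertwiner ** std_rep p"
proof (rule matrix_eq_columnsI)
  fix j
  have pp: "p permutes {1..5}"
    using p by (simp add: alt_group_carrier)
  have j: "idx j \<in> {1..5}"
    using idx_range[of j] by auto
  then have pj: "p (idx j) \<in> {1..5}"
    using permutes_in_image[OF pp] by simp
  have "column j (\<psi> p ** intertwiner) = act p (orbit_vec (idx j))"
    by (simp add: column_matrix_mult column_intertwiner act_def)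
  also have "\<dots> = intertwiner *v std_vec (p (idx j))"
    using act_orbit_vec[OF p j] intertwiner_std_vec[OF pj] by simp
  also have "\<dots> = column j (intertwiner ** std_rep p)"
    by (simp add: column_matrix_mult column_std_rep)
  finally show "column j (\<psi> p ** intertwiner) = column j (intertwiner ** std_rep p)" .
qed

lemma invertible_intertwiner: "invertible intertwiner"
proof (rule invertible_if_surj)
  let ?S = "range ((*v) intertwiner)"
  have "?S = {0} \<or> ?S = UNIV"
  proof (rule five_cycle_stable_eq_0_or_UNIV)
    show "0 \<in> ?S"
      by (rule range_eqI[of _ _ 0]) simp
    show "a + b \<in> ?S" if "a \<in> ?S" "b \<in> ?S" for a b
      using that by (auto simp flip: matrix_vector_right_distrib)
    have "act five_cycle (intertwiner *v c) = intertwiner *v (std_rep five_cycle *v c)" for c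
      using intertwiner_intertwines[OF five_cycle_alt_group]
      by (simp add: act_def matrix_vector_mul_assoc)
    then show "act five_cycle ` ?S \<subseteq> ?S"
      by auto
  qed
  moreover have "orbit_vec 1 \<in> ?S"
    using intertwiner_std_vec[of 1]
      by (metis atLeastAtMost_iff le_numeral_extra(4) one_le_numeral rangeI)
  moreover have "orbit_vec 1 \<noteq> 0"
    unfolding orbit_vec_def
    using act_neq_0[OF alt_group_funpow_closed[OF five_cycle_alt_group] klein_fixed_vec(2)] .
  ultimately show "surj ((*v) intertwiner)"
    by blast
qed

lemma central_involution_eq_neg_one:
  assumes zz: "z ** z = mat 1" and z1: "z \<noteq> mat 1" and comm: "z ** \<psi> five_cycle = \<psi> five_cycle ** z"
  shows "z = - mat 1"
proof -
  let ?F = "{w. z *v w = w}"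
  have "?F = {0} \<or> ?F = UNIV"
  proof (rule five_cycle_stable_eq_0_or_UNIV)
    have "z *v act five_cycle w = act five_cycle (z *v w)" for w
      using comm by (simp add: act_def matrix_vector_mul_assoc)
    then show "act five_cycle ` ?F \<subseteq> ?F"
      by auto
  qed (simp_all add: matrix_vector_right_distrib)
  moreover have "?F \<noteq> UNIV"
    using z1 by (auto simp: matrix_eq)
  ultimately have F: "?F = {0}"
    by blast
  have "z *v (w + z *v w) = w + z *v w" for w
    using zz by (simp add: matrix_vector_right_distrib matrix_vector_mul_assoc add.commute)
  then have "w + z *v w = 0" for w
    using F by blast
  then have "z *v w = - mat 1 *v w" for w
    by (simp add: matrix_neg_mult_vec eq_neg_iff_add_eq_0 add.commute)
  then show ?thesis
    by (simp add: matrix_eq)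
qed

lemma conjugate_std_rep:
  "\<exists>P\<in>carrier GL4F3. \<forall>p\<in>carrier (alt_group 5).
     \<psi> p = P \<otimes>\<^bsub>GL4F3\<^esub> std_rep p \<otimes>\<^bsub>GL4F3\<^esub> inv\<^bsub>GL4F3\<^esub> P"
proof (intro bexI[of _ intertwiner] ballI)
  show P: "intertwiner \<in> carrier GL4F3"
    using invertible_intertwiner by (simp add: carrier_GL4F3)
  fix p assume p: "p \<in> carrier (alt_group 5)"
  have "\<psi> p = \<psi> p ** (intertwiner ** inv\<^bsub>GL4F3\<^esub> intertwiner)"
    using group.r_inv[OF group_GL4F3 P] by simp
  also have "\<dots> = intertwiner ** std_rep p ** inv\<^bsub>GL4F3\<^esub> intertwiner"
    using intertwiner_intertwines[OF p] by (simp add: matrix_mul_assoc)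
  finally show "\<psi> p = intertwiner \<otimes>\<^bsub>GL4F3\<^esub> std_rep p \<otimes>\<^bsub>GL4F3\<^esub> inv\<^bsub>GL4F3\<^esub> intertwiner"
    by simp
qed

end

section \<open>Uniqueness up to conjugacy\<close>

context
  fixes \<phi> :: "(nat \<Rightarrow> nat) \<times> int \<Rightarrow> 3^4^4"
  assumes hom: "\<phi> \<in> hom A5xC2 GL4F3" and inj: "inj_on \<phi> (carrier A5xC2)"
begin

lemma hom_A5xC2_mult:
  assumes "p \<in> carrier (alt_group 5)" "q \<in> carrier (alt_group 5)" "c \<in> {0, 1}" "d \<in> {0, 1}"
  shows "\<phi> (p, c) ** \<phi> (q, d) = \<phi> (p \<circ> q, (c + d) mod 2)"
  using hom_mult[OF hom, of "(p, c)" "(q, d)"] assms by (simp add: carrier_A5xC2)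

lemma hom_A5xC2_one: "\<phi> (id, 0) = mat 1"
  using group_hom.hom_one[of A5xC2 GL4F3 \<phi>] hom group_A5xC2 group_GL4F3
  by (simp add: group_hom_def group_hom_axioms_def one_A5xC2)

lemma faithful_A5_rep_restrict: "faithful_A5_rep (\<lambda>p. \<phi> (p, 0))"
proof
  show "(\<lambda>p. \<phi> (p, 0)) \<in> hom (alt_group 5) GL4F3"
    using hom hom_A5xC2_mult by (auto intro!: homI simp: hom_def carrier_A5xC2 alt_group_mult)
  show "inj_on (\<lambda>p. \<phi> (p, 0)) (carrier (alt_group 5))"
    using inj by (auto intro!: inj_onI dest: inj_onD simp: carrier_A5xC2)
qed

lemma hom_A5xC2_central: "\<phi> (id, 1) = - mat 1"
proof (rule faithful_A5_rep.central_involution_eq_neg_one[OF faithful_A5_rep_restrict])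
  show "\<phi> (id, 1) ** \<phi> (id, 1) = mat 1"
    using hom_A5xC2_mult[OF alt_group_id alt_group_id, of 1 1] hom_A5xC2_one by simp
  show "\<phi> (id, 1) \<noteq> mat 1"
  proof
    assume "\<phi> (id, 1) = mat 1"
    then have "\<phi> (id, 1) = \<phi> (id, 0)"
      using hom_A5xC2_one by simp
    moreover have "(id, 1) \<in> carrier A5xC2" and "(id, 0) \<in> carrier A5xC2"
      by (simp_all add: carrier_A5xC2 alt_group_id)
    ultimately show False
      using inj_onD[OF inj, of "(id, 1)" "(id, 0)"] by simp
  qed
  show "\<phi> (id, 1) ** \<phi> (five_cycle, 0) = \<phi> (five_cycle, 0) ** \<phi> (id, 1)"
    using hom_A5xC2_mult[OF alt_group_id five_cycle_alt_group, of 1 0]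
      hom_A5xC2_mult[OF five_cycle_alt_group alt_group_id, of 0 1]
    by simp
qed

lemma faithful_hom_A5xC2_conjugate:
  "\<exists>P\<in>carrier GL4F3. \<forall>x\<in>carrier A5xC2.
     \<phi> x = P \<otimes>\<^bsub>GL4F3\<^esub> std_rep_C2 x \<otimes>\<^bsub>GL4F3\<^esub> inv\<^bsub>GL4F3\<^esub> P"
proof -
  obtain P where P: "P \<in> carrier GL4F3"
    and conj: "\<And>p. p \<in> carrier (alt_group 5) \<Longrightarrow>
      \<phi> (p, 0) = P \<otimes>\<^bsub>GL4F3\<^esub> std_rep p \<otimes>\<^bsub>GL4F3\<^esub> inv\<^bsub>GL4F3\<^esub> P"
    using faithful_A5_rep.conjugate_std_rep[OF faithful_A5_rep_restrict] by blast
  have split: "\<phi> (p, c) = (if c = 0 then \<phi> (p, 0) else - \<phi> (p, 0))"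
    if "p \<in> carrier (alt_group 5)" "c \<in> {0, 1}" for p c
    using hom_A5xC2_mult[OF that(1) alt_group_id, of 0 c] hom_A5xC2_central that(2)
    by (auto simp: matrix_mult_neg)
  show ?thesis
  proof (intro bexI[OF _ P] ballI)
    fix x assume "x \<in> carrier A5xC2"
    then obtain p c where x: "x = (p, c)" and p: "p \<in> carrier (alt_group 5)" and c: "c \<in> {0, 1}"
      by (auto simp: carrier_A5xC2)
    show "\<phi> x = P \<otimes>\<^bsub>GL4F3\<^esub> std_rep_C2 x \<otimes>\<^bsub>GL4F3\<^esub> inv\<^bsub>GL4F3\<^esub> P"
      using split[OF p c] conj[OF p] by (simp add: x std_rep_C2_def matrix_neg_mult matrix_mult_neg)
  qed
qed

end

lemma subgroups_iso_conjugate_std: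
  assumes "H \<in> subgroups_iso GL4F3 A5xC2"
  shows "\<exists>P\<in>carrier GL4F3. H = (\<lambda>h. P \<otimes>\<^bsub>GL4F3\<^esub> h \<otimes>\<^bsub>GL4F3\<^esub> inv\<^bsub>GL4F3\<^esub> P) ` std_subgroup"
proof -
  have sub: "subgroup H GL4F3" and "GL4F3\<lparr>carrier := H\<rparr> \<cong> A5xC2"
    using assms by (simp_all add: subgroups_iso_def)
  then obtain \<phi> where "\<phi> \<in> iso (GL4F3\<lparr>carrier := H\<rparr>) A5xC2"
    unfolding is_iso_def by blast
  then have iso: "inv_into H \<phi> \<in> iso A5xC2 (GL4F3\<lparr>carrier := H\<rparr>)"
    using group.iso_set_sym[OF group.subgroup_imp_group[OF group_GL4F3 sub]] by simp
  have "inv_into H \<phi> \<in> hom A5xC2 GL4F3"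
    using iso subgroup.subset[OF sub] by (auto simp: iso_def hom_def)
  moreover have "inj_on (inv_into H \<phi>) (carrier A5xC2)" and img: "inv_into H \<phi> ` carrier A5xC2 = H"
    using iso by (simp_all add: iso_def bij_betw_def)
  ultimately obtain P where P: "P \<in> carrier GL4F3" and conj: "\<And>x. x \<in> carrier A5xC2 \<Longrightarrow>
      inv_into H \<phi> x = P \<otimes>\<^bsub>GL4F3\<^esub> std_rep_C2 x \<otimes>\<^bsub>GL4F3\<^esub> inv\<^bsub>GL4F3\<^esub> P"
    using faithful_hom_A5xC2_conjugate by blast
  have "H = (\<lambda>x. P \<otimes>\<^bsub>GL4F3\<^esub> std_rep_C2 x \<otimes>\<^bsub>GL4F3\<^esub> inv\<^bsub>GL4F3\<^esub> P) ` carrier A5xC2"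
    using img conj by (simp cong: image_cong)
  then show ?thesis
    using P by (auto simp: std_subgroup_def image_image)
qed

lemma (in group) conjugate_of_conjugates:
  assumes a: "a \<in> carrier G" and b: "b \<in> carrier G" and S: "S \<subseteq> carrier G"
  shows "(\<lambda>h. b \<otimes> h \<otimes> inv b) ` S
    = (b \<otimes> inv a) <# ((\<lambda>h. a \<otimes> h \<otimes> inv a) ` S) #> inv (b \<otimes> inv a)"
proof -
  let ?c = "b \<otimes> inv a"
  have cancel: "inv x \<otimes> (x \<otimes> y) = y" if "x \<in> carrier G" "y \<in> carrier G" for x y
    using that by (simp add: m_assoc[symmetric])
  have "?c \<otimes> (a \<otimes> h \<otimes> inv a) \<otimes> inv ?c = b \<otimes> h \<otimes> inv b" if "h \<in> carrier G" for h
    using a b that by (simp add: m_assoc inv_mult_group cancel)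
  then have "(\<lambda>h. b \<otimes> h \<otimes> inv b) ` S = (\<lambda>h. ?c \<otimes> (a \<otimes> h \<otimes> inv a) \<otimes> inv ?c) ` S"
    using S by (intro image_cong) auto
  also have "\<dots> = (\<lambda>h. ?c \<otimes> h \<otimes> inv ?c) ` ((\<lambda>h. a \<otimes> h \<otimes> inv a) ` S)"
    by (simp add: image_image)
  also have "\<dots> = ?c <# ((\<lambda>h. a \<otimes> h \<otimes> inv a) ` S) #> inv ?c"
    unfolding l_coset_def r_coset_def by auto
  finally show ?thesis .
qed

theorem lemma3p14:
  shows "subgroups_iso GL4F3 A5xC2 \<noteq> {} \<and>
         (\<forall>H\<in>subgroups_iso GL4F3 A5xC2. \<forall>K\<in>subgroups_iso GL4F3 A5xC2.
             conjugate_subgroups GL4F3 H K)"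
proof (intro conjI ballI)
  show "subgroups_iso GL4F3 A5xC2 \<noteq> {}"
    using std_subgroup_iso by blast
  fix H K assume "H \<in> subgroups_iso GL4F3 A5xC2" "K \<in> subgroups_iso GL4F3 A5xC2"
  then obtain a b where a: "a \<in> carrier GL4F3" and b: "b \<in> carrier GL4F3"
    and H: "H = (\<lambda>h. a \<otimes>\<^bsub>GL4F3\<^esub> h \<otimes>\<^bsub>GL4F3\<^esub> inv\<^bsub>GL4F3\<^esub> a) ` std_subgroup"
    and K: "K = (\<lambda>h. b \<otimes>\<^bsub>GL4F3\<^esub> h \<otimes>\<^bsub>GL4F3\<^esub> inv\<^bsub>GL4F3\<^esub> b) ` std_subgroup"
    using subgroups_iso_conjugate_std by meson
  have "std_subgroup \<subseteq> carrier GL4F3"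
    using std_subgroup_iso by (auto simp: subgroups_iso_def dest: subgroup.subset)
  then have "K = (b \<otimes>\<^bsub>GL4F3\<^esub> inv\<^bsub>GL4F3\<^esub> a) <#\<^bsub>GL4F3\<^esub> H
      #>\<^bsub>GL4F3\<^esub> inv\<^bsub>GL4F3\<^esub> (b \<otimes>\<^bsub>GL4F3\<^esub> inv\<^bsub>GL4F3\<^esub> a)"
    unfolding H K by (rule group.conjugate_of_conjugates[OF group_GL4F3 a b])
  moreover have "b \<otimes>\<^bsub>GL4F3\<^esub> inv\<^bsub>GL4F3\<^esub> a \<in> carrier GL4F3"
    by (rule monoid.m_closed[OF group.is_monoid[OF group_GL4F3] b group.inv_closed[OF
      group_GL4F3 a]])
  ultimately show "conjugate_subgroups GL4F3 H K"
    unfolding conjugate_subgroups_def by blast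
qed

end
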